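(* Let $G$ be a compact Lie group. If $G$ is not a BU-group of type I, then $G$ is not a BU-group of type II.
   Context: An orthogonal $G$-representation $V$ is fixed-point-free if $V^G=0$; $S(V)$ denotes its unit sphere, and a $G$-map is a continuous $G$-equivariant map. $G$ is a BU-group of type I if for all fixed-point-free orthogonal $G$-representations $V,W$, the existence of a $G$-map $f:S(V)\to S(W)$ implies $\dim V\le\dim W$. $G$ is a BU-group of type II if for all fixed-point-free orthogonal $G$-representations $V,W$ with $\dim V=\dim W$, every $G$-map $f:S(V)\to S(W)$ has $\deg f\neq 0$. *)

theory Defs
  imports "HOL-Analysis.Analysis" "HOL-Homology.Homology"
begin

text \<open>A compact Lie group, modelled as a compact subgroup of GL(N,R)
  (a compact linear group). Every compact subgroup of GL(N,R) is closed, hence a Lie group,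
  and every compact Lie group is isomorphic to one of these.\<close>
definition compact_matrix_group :: "(real^'n^'n) set \<Rightarrow> bool" where
  "compact_matrix_group G \<longleftrightarrow>
     compact G \<and> (\<forall>A\<in>G. invertible A) \<and> mat 1 \<in> G \<and>
     (\<forall>A\<in>G. \<forall>B\<in>G. A ** B \<in> G) \<and> (\<forall>A\<in>G. matrix_inv A \<in> G)"

text \<open>An n-dimensional orthogonal representation: a continuous homomorphism
  from G into O(n), given by matrix entries rho g i j (i, j < n).
  Vectors of R^n are functions nat => real vanishing outside {..<n}.\<close>
definition orth_rep :: "(real^'n^'n) set \<Rightarrow> nat \<Rightarrow> (real^'n^'n \<Rightarrow> nat \<Rightarrow> nat \<Rightarrow> real) \<Rightarrow> bool" where
  "orth_rep G n \<rho> \<longleftrightarrow>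
     (\<forall>i<n. \<forall>j<n. continuous_on G (\<lambda>g. \<rho> g i j)) \<and>
     (\<forall>g\<in>G. \<forall>h\<in>G. \<forall>i<n. \<forall>j<n. \<rho> (g ** h) i j = (\<Sum>k<n. \<rho> g i k * \<rho> h k j)) \<and>
     (\<forall>g\<in>G. \<forall>i<n. \<forall>j<n. (\<Sum>k<n. \<rho> g k i * \<rho> g k j) = (if i = j then 1 else 0))"

definition rep_act :: "nat \<Rightarrow> (real^'n^'n \<Rightarrow> nat \<Rightarrow> nat \<Rightarrow> real) \<Rightarrow> real^'n^'n \<Rightarrow> (nat \<Rightarrow> real) \<Rightarrow> (nat \<Rightarrow> real)" where
  "rep_act n \<rho> g x = (\<lambda>i. if i < n then (\<Sum>j<n. \<rho> g i j * x j) else 0)"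

definition vec_space :: "nat \<Rightarrow> (nat \<Rightarrow> real) set" where
  "vec_space n = {x. \<forall>i\<ge>n. x i = 0}"

definition fixed_point_free :: "(real^'n^'n) set \<Rightarrow> nat \<Rightarrow> (real^'n^'n \<Rightarrow> nat \<Rightarrow> nat \<Rightarrow> real) \<Rightarrow> bool" where
  "fixed_point_free G n \<rho> \<longleftrightarrow>
     (\<forall>x\<in>vec_space n. (\<forall>g\<in>G. rep_act n \<rho> g x = x) \<longrightarrow> x = (\<lambda>i. 0))"

definition usphere :: "nat \<Rightarrow> (nat \<Rightarrow> real) set" where
  "usphere n = {x. (\<Sum>i<n. x i ^ 2) = 1 \<and> (\<forall>i\<ge>n. x i = 0)}"

definition usphere_top :: "nat \<Rightarrow> (nat \<Rightarrow> real) topology" where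
  "usphere_top n = subtopology (powertop_real UNIV) (usphere n)"

definition G_map :: "(real^'n^'n) set \<Rightarrow> nat \<Rightarrow> (real^'n^'n \<Rightarrow> nat \<Rightarrow> nat \<Rightarrow> real)
     \<Rightarrow> nat \<Rightarrow> (real^'n^'n \<Rightarrow> nat \<Rightarrow> nat \<Rightarrow> real) \<Rightarrow> ((nat \<Rightarrow> real) \<Rightarrow> (nat \<Rightarrow> real)) \<Rightarrow> bool" where
  "G_map G n \<rho> m \<sigma> f \<longleftrightarrow>
     continuous_map (usphere_top n) (usphere_top m) f \<and>
     (\<forall>g\<in>G. \<forall>x\<in>usphere n. f (rep_act n \<rho> g x) = rep_act m \<sigma> g (f x))"

definition BU_type_I :: "(real^'n^'n) set \<Rightarrow> bool" where
  "BU_type_I G \<longleftrightarrow>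
     (\<forall>n m \<rho> \<sigma> f. orth_rep G n \<rho> \<and> fixed_point_free G n \<rho> \<and>
        orth_rep G m \<sigma> \<and> fixed_point_free G m \<sigma> \<and> G_map G n \<rho> m \<sigma> f \<longrightarrow> n \<le> m)"

text \<open>Degree of a map S^(n-1) -> S^(n-1) is the Brouwer degree (HOL-Homology);
  for n = 0 (empty sphere, reduced homology in degree -1) the degree is 1 by convention.\<close>
definition BU_type_II :: "(real^'n^'n) set \<Rightarrow> bool" where
  "BU_type_II G \<longleftrightarrow>
     (\<forall>n \<rho> \<sigma> f. orth_rep G n \<rho> \<and> fixed_point_free G n \<rho> \<and>
        orth_rep G n \<sigma> \<and> fixed_point_free G n \<sigma> \<and> G_map G n \<rho> n \<sigma> f \<longrightarrow>
        n = 0 \<or> Brouwer_degree2 (n - 1) f \<noteq> 0)"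

end

theory Submission
  imports Defs
begin

text \<open>Let f : S(V) \<rightarrow> S(W) be a G-map with dim V = n > m = dim W. The m-fold join of f,
  which applies the cone v \<mapsto> |v| f(v/|v|) to each of m blocks, is a G-map
  S(mV) \<rightarrow> S(mW), and mW is the subrepresentation of nW formed by the first m summands.
  This gives a G-map S(mV) \<rightarrow> S(nW) between fixed-point-free representations of the same
  dimension mn whose image misses the last summand; being non-surjective, it has degree 0.\<close>

lemma sum_lessThan_mult_blocks:
  fixes h :: "nat \<Rightarrow> 'a::comm_monoid_add"
  shows "(\<Sum>j<k*n. h j) = (\<Sum>q<k. \<Sum>r<n. h (q*n + r))"
proof -
  have "(\<Sum>j<k*n. h j) = (\<Sum>q<k. sum h {q*n..<q*n + n})"
    by (rule sum.nat_group[symmetric])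
  also have "\<dots> = (\<Sum>q<k. \<Sum>r<n. h (q*n + r))"
    by (rule sum.cong[OF refl]) (simp add: sum.atLeastLessThan_shift_0 atLeast0LessThan comp_def)
  finally show ?thesis .
qed

lemma sum_lessThan_mult_block_select:
  fixes h :: "nat \<Rightarrow> 'a::comm_monoid_add"
  assumes "q < k"
  shows "(\<Sum>j<k*n. if j div n = q then h j else 0) = (\<Sum>r<n. h (q*n + r))"
proof -
  have "(\<Sum>j<k*n. if j div n = q then h j else 0)
      = (\<Sum>p<k. if p = q then (\<Sum>r<n. h (p*n + r)) else 0)"
    unfolding sum_lessThan_mult_blocks by (intro sum.cong refl) auto
  then show ?thesis
    using assms by simp
qed

lemma block_index_less: "q < k \<Longrightarrow> r < n \<Longrightarrow> q*n + r < k*(n::nat)"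
  using mult_le_mono1[of "Suc q" k n] by simp

lemma mod_less_of_less_mult: "i < k*n \<Longrightarrow> i mod n < (n::nat)"
  by (metis mod_less_divisor mult_0_right not_less_zero gr0I)

section \<open>Direct sums of copies of a representation\<close>

lemma rep_act_cong: "(\<And>j. j < n \<Longrightarrow> x j = y j) \<Longrightarrow> rep_act n \<rho> g x = rep_act n \<rho> g y"
  by (auto simp: rep_act_def intro!: ext sum.cong)

lemma rep_act_scale: "rep_act n \<rho> g (\<lambda>j. c * x j) = (\<lambda>i. c * rep_act n \<rho> g x i)"
  by (simp add: rep_act_def sum_distrib_left algebra_simps fun_eq_iff)

lemma sum_power2_rep_act:
  assumes "orth_rep G n \<rho>" "g \<in> G"
  shows "(\<Sum>r<n. (rep_act n \<rho> g v r)^2) = (\<Sum>r<n. (v r)^2)"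
proof -
  have orth: "(\<Sum>r<n. \<rho> g r s * \<rho> g r t) = (if s = t then 1 else 0)" if "s < n" "t < n" for s t
    using assms that by (simp add: orth_rep_def)
  have "(\<Sum>r<n. (rep_act n \<rho> g v r)^2)
      = (\<Sum>r<n. \<Sum>s<n. \<Sum>t<n. v s * v t * (\<rho> g r s * \<rho> g r t))"
    by (simp add: rep_act_def power2_eq_square sum_product algebra_simps)
  also have "\<dots> = (\<Sum>s<n. \<Sum>t<n. \<Sum>r<n. v s * v t * (\<rho> g r s * \<rho> g r t))"
    by (subst sum.swap) (rule sum.cong[OF refl], rule sum.swap)
  also have "\<dots> = (\<Sum>s<n. \<Sum>t<n. if s = t then v s * v t else 0)"
    by (intro sum.cong refl) (simp add: sum_distrib_left[symmetric] orth)
  also have "\<dots> = (\<Sum>r<n. (v r)^2)"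
    by (simp add: power2_eq_square)
  finally show ?thesis .
qed

text \<open>Block-diagonal matrix of kV: copy q acts on the coordinates q*n, ..., q*n + n - 1.\<close>
definition rep_copies ::
    "nat \<Rightarrow> nat \<Rightarrow> ('g \<Rightarrow> nat \<Rightarrow> nat \<Rightarrow> real) \<Rightarrow> 'g \<Rightarrow> nat \<Rightarrow> nat \<Rightarrow> real" where
  "rep_copies n k \<rho> g i j =
     (if i < k*n \<and> j < k*n \<and> i div n = j div n then \<rho> g (i mod n) (j mod n) else 0)"

definition vec_block :: "nat \<Rightarrow> nat \<Rightarrow> (nat \<Rightarrow> real) \<Rightarrow> nat \<Rightarrow> real" where
  "vec_block n q x = (\<lambda>r. if r < n then x (q*n + r) else 0)"

lemma vec_block_in_vec_space: "vec_block n q x \<in> vec_space n"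
  by (simp add: vec_block_def vec_space_def)

lemma rep_copies_block_entry:
  assumes "q < k" "r < n" "j < k*n"
  shows "rep_copies n k \<rho> g (q*n + r) j = (if q = j div n then \<rho> g r (j mod n) else 0)"
  using assms block_index_less[OF assms(1,2)] by (auto simp: rep_copies_def)

lemma rep_copies_row_sum:
  assumes "i < k*n"
  shows "(\<Sum>j<k*n. rep_copies n k \<rho> g i j * x j) = (\<Sum>r<n. \<rho> g (i mod n) r * x (i div n * n + r))"
proof -
  have "(\<Sum>j<k*n. rep_copies n k \<rho> g i j * x j)
      = (\<Sum>j<k*n. if j div n = i div n then \<rho> g (i mod n) (j mod n) * x j else 0)"
    using assms by (intro sum.cong refl) (auto simp: rep_copies_def)
  also have "\<dots> = (\<Sum>r<n. \<rho> g (i mod n) r * x (i div n * n + r))"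
    using assms less_mult_imp_div_less[OF assms]
    by (subst sum_lessThan_mult_block_select) (auto intro!: sum.cong)
  finally show ?thesis .
qed

lemma rep_copies_column_sum:
  assumes "j < k*n"
  shows "(\<Sum>i<k*n. x i * rep_copies n k \<rho> g i j) = (\<Sum>r<n. x (j div n * n + r) * \<rho> g r (j mod n))"
proof -
  have "(\<Sum>i<k*n. x i * rep_copies n k \<rho> g i j)
      = (\<Sum>i<k*n. if i div n = j div n then x i * \<rho> g (i mod n) (j mod n) else 0)"
    using assms by (intro sum.cong refl) (auto simp: rep_copies_def)
  also have "\<dots> = (\<Sum>r<n. x (j div n * n + r) * \<rho> g r (j mod n))"
    using assms less_mult_imp_div_less[OF assms]
    by (subst sum_lessThan_mult_block_select) (auto intro!: sum.cong)
  finally show ?thesis .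
qed

lemma orth_rep_rep_copies:
  assumes "orth_rep G n \<rho>"
  shows "orth_rep G (k*n) (rep_copies n k \<rho>)"
  unfolding orth_rep_def
proof (intro conjI ballI allI impI)
  fix i j assume ij: "i < k*n" "j < k*n"
  note mod_less = mod_less_of_less_mult[OF ij(1)] mod_less_of_less_mult[OF ij(2)]
  have "continuous_on G (\<lambda>g. \<rho> g (i mod n) (j mod n))"
    using assms mod_less by (simp add: orth_rep_def)
  then show "continuous_on G (\<lambda>g. rep_copies n k \<rho> g i j)"
    using ij by (cases "i div n = j div n") (simp_all add: rep_copies_def)
next
  fix g h i j assume gh: "g \<in> G" "h \<in> G" and ij: "i < k*n" "j < k*n"
  note mod_less = mod_less_of_less_mult[OF ij(1)] mod_less_of_less_mult[OF ij(2)]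
  have "(\<Sum>l<k*n. rep_copies n k \<rho> g i l * rep_copies n k \<rho> h l j)
      = (\<Sum>r<n. \<rho> g (i mod n) r * (if i div n = j div n then \<rho> h r (j mod n) else 0))"
    using ij less_mult_imp_div_less[OF ij(1)]
    by (simp add: rep_copies_row_sum rep_copies_block_entry)
  also have "\<dots> = rep_copies n k \<rho> (g ** h) i j"
    using assms gh ij mod_less by (simp add: rep_copies_def orth_rep_def)
  finally show "rep_copies n k \<rho> (g ** h) i j
      = (\<Sum>l<k*n. rep_copies n k \<rho> g i l * rep_copies n k \<rho> h l j)" by simp
next
  fix g i j assume g: "g \<in> G" and ij: "i < k*n" "j < k*n"
  note mod_less = mod_less_of_less_mult[OF ij(1)] mod_less_of_less_mult[OF ij(2)]
  have "(\<Sum>l<k*n. rep_copies n k \<rho> g l i * rep_copies n k \<rho> g l j)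
      = (\<Sum>r<n. (if j div n = i div n then \<rho> g r (i mod n) else 0) * \<rho> g r (j mod n))"
    using ij less_mult_imp_div_less[OF ij(2)]
    by (simp add: rep_copies_column_sum rep_copies_block_entry)
  also have "\<dots> = (if i = j then 1 else 0)"
  proof (cases "i div n = j div n")
    case True
    then have "i = j \<longleftrightarrow> i mod n = j mod n"
      by (metis div_mult_mod_eq)
    then show ?thesis
      using True assms g mod_less by (simp add: orth_rep_def)
  qed auto
  finally show "(\<Sum>l<k*n. rep_copies n k \<rho> g l i * rep_copies n k \<rho> g l j) = (if i = j then 1 else 0)" .
qed

lemma rep_act_rep_copies:
  assumes "i < k*n"
  shows "rep_act (k*n) (rep_copies n k \<rho>) g x i = rep_act n \<rho> g (vec_block n (i div n) x) (i mod n)"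
  using assms mod_less_of_less_mult[OF assms]
  by (simp add: rep_act_def rep_copies_row_sum vec_block_def)

lemma vec_block_rep_act_rep_copies:
  assumes "q < k"
  shows "vec_block n q (rep_act (k*n) (rep_copies n k \<rho>) g x) = rep_act n \<rho> g (vec_block n q x)"
proof
  fix r
  show "vec_block n q (rep_act (k*n) (rep_copies n k \<rho>) g x) r = rep_act n \<rho> g (vec_block n q x) r"
    using block_index_less[OF assms, of r n]
    by (cases "r < n") (simp_all add: vec_block_def rep_act_rep_copies, simp add: rep_act_def)
qed

lemma fixed_point_free_rep_copies:
  assumes "fixed_point_free G n \<rho>"
  shows "fixed_point_free G (k*n) (rep_copies n k \<rho>)"
  unfolding fixed_point_free_def
proof (intro ballI impI)
  fix x assume x: "x \<in> vec_space (k*n)"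
    and fixed: "\<forall>g\<in>G. rep_act (k*n) (rep_copies n k \<rho>) g x = x"
  have block_zero: "vec_block n q x = (\<lambda>i. 0)" if "q < k" for q
  proof -
    have "vec_block n q x \<in> vec_space n"
      by (simp add: vec_block_def vec_space_def)
    moreover have "\<forall>g\<in>G. rep_act n \<rho> g (vec_block n q x) = vec_block n q x"
      using fixed vec_block_rep_act_rep_copies[OF that] by metis
    ultimately show ?thesis
      using assms unfolding fixed_point_free_def by blast
  qed
  show "x = (\<lambda>i. 0)"
  proof
    fix i
    show "x i = 0"
    proof (cases "i < k*n")
      case True
      then have "vec_block n (i div n) x (i mod n) = 0"
        using block_zero[OF less_mult_imp_div_less[OF True]] by simp
      then show ?thesis
        using mod_less_of_less_mult[OF True] by (simp add: vec_block_def)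
    qed (use x in \<open>simp add: vec_space_def\<close>)
  qed
qed

lemma rep_act_rep_copies_mono:
  assumes x: "x \<in> vec_space (k*n)" and "k \<le> l"
  shows "rep_act (l*n) (rep_copies n l \<rho>) g x = rep_act (k*n) (rep_copies n k \<rho>) g x"
proof
  fix i
  have "k*n \<le> l*n"
    using \<open>k \<le> l\<close> by simp
  consider "i < k*n" | "k*n \<le> i" "i < l*n" | "l*n \<le> i"
    by linarith
  then show "rep_act (l*n) (rep_copies n l \<rho>) g x i = rep_act (k*n) (rep_copies n k \<rho>) g x i"
  proof cases
    case 1
    moreover have "i < l*n"
      using 1 \<open>k*n \<le> l*n\<close> by linarith
    ultimately show ?thesis
      by (simp add: rep_act_rep_copies)
  next
    case 2
    then have "0 < n"
      by (intro gr0I) simp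
    then have "k*n \<le> i div n * n"
      using 2 by (simp add: less_eq_div_iff_mult_less_eq)
    then have "x (i div n * n + r) = 0" for r
      using x unfolding vec_space_def by (metis (mono_tags) le_add1 mem_Collect_eq order_trans)
    then have "vec_block n (i div n) x = vec_block n (i div n) (\<lambda>_. 0)"
      by (simp add: vec_block_def fun_eq_iff)
    then show ?thesis
      using 2 by (simp add: rep_act_rep_copies) (simp add: rep_act_def vec_block_def)
  next
    case 3
    moreover have "\<not> i < k*n"
      using 3 \<open>k*n \<le> l*n\<close> by linarith
    ultimately show ?thesis
      by (simp add: rep_act_def)
  qed
qed

section \<open>Unit spheres\<close>

lemma usphere_top_eq_top_of_set: "usphere_top n = top_of_set (usphere n)"
  unfolding usphere_top_def euclidean_product_topology ..

lemma topspace_usphere_top: "topspace (usphere_top n) = usphere n"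
  by (simp add: usphere_top_def)

lemma continuous_map_usphere_top_iff:
  "continuous_map (usphere_top n) (usphere_top m) f \<longleftrightarrow>
     continuous_on (usphere n) f \<and> f ` usphere n \<subseteq> usphere m"
  unfolding usphere_top_eq_top_of_set
  by (simp add: continuous_map_in_subtopology image_subset_iff_funcset)

lemma nsphere_eq_usphere_top: "0 < n \<Longrightarrow> nsphere (n - 1) = usphere_top n"
  unfolding nsphere usphere_top_def usphere_def
  by (intro arg_cong[where f="subtopology _"] Collect_cong) (auto simp: lessThan_Suc_atMost[symmetric])

lemma usphere_subset_vec_space: "usphere n \<subseteq> vec_space n"
  by (auto simp: usphere_def vec_space_def)

lemma usphere_mono:
  assumes "n \<le> m"
  shows "usphere n \<subseteq> usphere m"
proof
  fix x assume x: "x \<in> usphere n"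
  have "(\<Sum>i<m. x i ^ 2) = (\<Sum>i<n. x i ^ 2)"
    using assms x by (intro sum.mono_neutral_right) (auto simp: usphere_def)
  then show "x \<in> usphere m"
    using assms x by (simp add: usphere_def)
qed

lemma basis_vector_in_usphere: "j < n \<Longrightarrow> (\<lambda>i. if i = j then 1 else 0) \<in> usphere n"
  by (simp add: usphere_def if_distrib[where f="\<lambda>x. x^2"] cong: if_cong)

lemma usphere_eq_empty_iff: "usphere n = {} \<longleftrightarrow> n = 0"
  using basis_vector_in_usphere[of 0 n] by (cases "n = 0") (simp add: usphere_def, blast)

lemma abs_le_1_if_in_usphere:
  assumes "y \<in> usphere m"
  shows "\<bar>y r\<bar> \<le> 1"
proof (cases "r < m")
  case True
  have "(y r)^2 \<le> (\<Sum>s<m. (y s)^2)"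
    using True by (intro member_le_sum) auto
  also have "\<dots> = 1"
    using assms by (simp add: usphere_def)
  finally show ?thesis
    by (simp add: abs_square_le_1)
qed (use assms in \<open>simp add: usphere_def\<close>)

lemma Brouwer_degree2_eq_0_if_image_in_lower_sphere:
  assumes f: "continuous_map (usphere_top n) (usphere_top n) f"
    and image: "f ` usphere n \<subseteq> usphere m" and "m < n"
  shows "Brouwer_degree2 (n - 1) f = 0"
proof -
  have n: "0 < n"
    using \<open>m < n\<close> by simp
  let ?e = "\<lambda>i. if i = n - 1 then 1 else (0::real)"
  have "?e \<in> usphere n"
    using n by (intro basis_vector_in_usphere) simp
  moreover have "?e \<notin> usphere m"
    using \<open>m < n\<close> by (auto simp: usphere_def)
  ultimately have "f ` usphere n \<noteq> usphere n"
    using image by blast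
  then show ?thesis
    using f Brouwer_degree2_nonsurjective[of "n - 1" f]
    unfolding nsphere_eq_usphere_top[OF n] topspace_usphere_top by blast
qed

section \<open>Cones and joins of sphere maps\<close>

lemma continuous_on_mult_bounded_off_zeros:
  fixes t \<psi> :: "'a::metric_space \<Rightarrow> real"
  assumes t: "continuous_on S t" and \<psi>: "continuous_on {x\<in>S. t x \<noteq> 0} \<psi>"
    and bounded: "\<And>x. x \<in> S \<Longrightarrow> t x \<noteq> 0 \<Longrightarrow> \<bar>\<psi> x\<bar> \<le> B"
  shows "continuous_on S (\<lambda>x. t x * \<psi> x)"
  unfolding continuous_on_def
proof
  fix a assume a: "a \<in> S"
  have t_lim: "(t \<longlongrightarrow> t a) (at a within S)"
    using t a by (simp add: continuous_on_def)
  show "((\<lambda>x. t x * \<psi> x) \<longlongrightarrow> t a * \<psi> a) (at a within S)"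
  proof (cases "t a = 0")
    case True
    have "\<bar>t x * \<psi> x\<bar> \<le> \<bar>t x\<bar> * B" if "x \<in> S" for x
      using bounded[OF that] by (cases "t x = 0") (simp_all add: abs_mult mult_left_mono)
    then have "eventually (\<lambda>x. norm (t x * \<psi> x) \<le> norm (t x) * B) (at a within S)"
      by (auto simp: eventually_at_filter)
    then show ?thesis
      using True t_lim by (simp add: tendsto_0_le)
  next
    case False
    have "continuous_on {x\<in>S. t x \<noteq> 0} (\<lambda>x. t x * \<psi> x)"
      using t \<psi> by (intro continuous_on_mult continuous_on_subset[OF t]) auto
    then have "((\<lambda>x. t x * \<psi> x) \<longlongrightarrow> t a * \<psi> a) (at a within {x\<in>S. t x \<noteq> 0})"
      using a False by (simp add: continuous_on_def)
    moreover have "eventually (\<lambda>x. x \<in> {x\<in>S. t x \<noteq> 0} \<longleftrightarrow> x \<in> S) (at a)"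
      using tendsto_imp_eventually_ne[OF t_lim False]
      by (auto simp: eventually_at_filter elim: eventually_mono)
    ultimately show ?thesis
      by (rule Lim_transform_within_set)
  qed
qed

definition euclid_norm :: "nat \<Rightarrow> (nat \<Rightarrow> real) \<Rightarrow> real" where
  "euclid_norm n v = sqrt (\<Sum>r<n. (v r)^2)"

definition euclid_normalize :: "nat \<Rightarrow> (nat \<Rightarrow> real) \<Rightarrow> nat \<Rightarrow> real" where
  "euclid_normalize n v = (\<lambda>r. v r / euclid_norm n v)"

text \<open>At v = 0 the junk value f 0 (as 0 / 0 = 0) is multiplied by 0.\<close>
definition cone_map :: "nat \<Rightarrow> ((nat \<Rightarrow> real) \<Rightarrow> nat \<Rightarrow> real) \<Rightarrow> (nat \<Rightarrow> real) \<Rightarrow> nat \<Rightarrow> real" where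
  "cone_map n f v = (\<lambda>r. euclid_norm n v * f (euclid_normalize n v) r)"

lemma euclid_norm_power2: "(euclid_norm n v)^2 = (\<Sum>r<n. (v r)^2)"
  unfolding euclid_norm_def by (simp add: sum_nonneg)

lemma continuous_on_euclid_norm: "continuous_on S (euclid_norm n)"
  unfolding euclid_norm_def
  by (intro continuous_intros continuous_on_subset[OF continuous_on_product_coordinates]) simp

lemma euclid_normalize_in_usphere:
  assumes "v \<in> vec_space n" "euclid_norm n v \<noteq> 0"
  shows "euclid_normalize n v \<in> usphere n"
proof -
  have "(\<Sum>r<n. (euclid_normalize n v r)^2) = (\<Sum>r<n. (v r)^2) / (euclid_norm n v)^2"
    by (simp add: euclid_normalize_def power_divide sum_divide_distrib)
  also have "\<dots> = 1"
    using assms(2) by (simp add: euclid_norm_power2[symmetric])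
  finally show ?thesis
    using assms(1) by (simp add: usphere_def vec_space_def euclid_normalize_def)
qed

lemma euclid_norm_rep_act:
  assumes "orth_rep G n \<rho>" "g \<in> G"
  shows "euclid_norm n (rep_act n \<rho> g v) = euclid_norm n v"
  using sum_power2_rep_act[OF assms] by (simp add: euclid_norm_def)

lemma euclid_normalize_rep_act:
  assumes "orth_rep G n \<rho>" "g \<in> G"
  shows "euclid_normalize n (rep_act n \<rho> g v) = rep_act n \<rho> g (euclid_normalize n v)"
  using euclid_norm_rep_act[OF assms]
  by (auto simp: euclid_normalize_def rep_act_def sum_divide_distrib fun_eq_iff)

lemma cone_map_rep_act:
  assumes \<rho>: "orth_rep G n \<rho>" and g: "g \<in> G" and v: "v \<in> vec_space n"
    and f: "\<forall>u\<in>usphere n. f (rep_act n \<rho> g u) = rep_act m \<sigma> g (f u)"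
  shows "cone_map n f (rep_act n \<rho> g v) = rep_act m \<sigma> g (cone_map n f v)"
proof (cases "euclid_norm n v = 0")
  case True
  then show ?thesis
    using rep_act_scale[of m \<sigma> g 0] by (simp add: cone_map_def euclid_norm_rep_act[OF \<rho> g])
next
  case False
  then have "f (rep_act n \<rho> g (euclid_normalize n v)) = rep_act m \<sigma> g (f (euclid_normalize n v))"
    using f v euclid_normalize_in_usphere by blast
  then show ?thesis
    by (simp add: cone_map_def euclid_norm_rep_act[OF \<rho> g] euclid_normalize_rep_act[OF \<rho> g]
        rep_act_scale)
qed

lemma sum_power2_cone_map:
  assumes f: "f ` usphere n \<subseteq> usphere m" and v: "v \<in> vec_space n"
  shows "(\<Sum>r<m. (cone_map n f v r)^2) = (euclid_norm n v)^2"
proof (cases "euclid_norm n v = 0")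
  case False
  then have "f (euclid_normalize n v) \<in> usphere m"
    using f v euclid_normalize_in_usphere by blast
  then show ?thesis
    by (simp add: cone_map_def power_mult_distrib sum_distrib_left[symmetric] usphere_def)
qed (simp add: cone_map_def)

lemma continuous_on_cone_map:
  assumes f: "continuous_on (usphere n) f" and image: "f ` usphere n \<subseteq> usphere m"
  shows "continuous_on (vec_space n) (\<lambda>v. cone_map n f v r)"
  unfolding cone_map_def
proof (rule continuous_on_mult_bounded_off_zeros[OF continuous_on_euclid_norm])
  let ?S = "{v \<in> vec_space n. euclid_norm n v \<noteq> 0}"
  have "continuous_on ?S (euclid_normalize n)"
    unfolding euclid_normalize_def
    by (intro continuous_on_coordinatewise_then_product continuous_on_divide continuous_on_euclid_norm
        continuous_on_subset[OF continuous_on_product_coordinates]) auto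
  moreover have "euclid_normalize n ` ?S \<subseteq> usphere n"
    using euclid_normalize_in_usphere by blast
  ultimately have "continuous_on ?S (f \<circ> euclid_normalize n)"
    by (intro continuous_on_compose continuous_on_subset[OF f])
  then show "continuous_on ?S (\<lambda>v. f (euclid_normalize n v) r)"
    by (auto dest: continuous_on_product_then_coordinatewise)
  fix v assume "v \<in> vec_space n" "euclid_norm n v \<noteq> 0"
  then show "\<bar>f (euclid_normalize n v) r\<bar> \<le> 1"
    using image euclid_normalize_in_usphere abs_le_1_if_in_usphere by blast
qed

definition join_copies ::
    "nat \<Rightarrow> nat \<Rightarrow> nat \<Rightarrow> ((nat \<Rightarrow> real) \<Rightarrow> nat \<Rightarrow> real) \<Rightarrow> (nat \<Rightarrow> real) \<Rightarrow> nat \<Rightarrow> real" where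
  "join_copies n m k f x =
     (\<lambda>i. if i < k*m then cone_map n f (vec_block n (i div m) x) (i mod m) else 0)"

lemma continuous_on_vec_block: "continuous_on S (vec_block n q)"
  unfolding vec_block_def
proof (intro continuous_on_coordinatewise_then_product)
  fix r
  show "continuous_on S (\<lambda>x. if r < n then x (q*n + r) else 0)"
    by (cases "r < n") (simp_all add: continuous_on_subset[OF continuous_on_product_coordinates])
qed

lemma join_copies_block_entry:
  assumes "q < k" "r < m"
  shows "join_copies n m k f x (q*m + r) = cone_map n f (vec_block n q x) r"
  using assms block_index_less[OF assms] by (simp add: join_copies_def)

lemma join_copies_in_usphere:
  assumes f: "f ` usphere n \<subseteq> usphere m" and x: "x \<in> usphere (k*n)"
  shows "join_copies n m k f x \<in> usphere (k*m)"
proof -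
  have "(\<Sum>i<k*m. (join_copies n m k f x i)^2)
      = (\<Sum>q<k. \<Sum>r<m. (cone_map n f (vec_block n q x) r)^2)"
    unfolding sum_lessThan_mult_blocks by (intro sum.cong refl) (simp add: join_copies_block_entry)
  also have "\<dots> = (\<Sum>q<k. (euclid_norm n (vec_block n q x))^2)"
    by (simp add: sum_power2_cone_map[OF f vec_block_in_vec_space])
  also have "\<dots> = (\<Sum>q<k. \<Sum>r<n. (x (q*n + r))^2)"
    by (auto simp: euclid_norm_power2 vec_block_def intro!: sum.cong)
  also have "\<dots> = 1"
    using x sum_lessThan_mult_blocks[of "\<lambda>i. (x i)^2" k n] by (simp add: usphere_def)
  finally show ?thesis
    by (simp add: usphere_def join_copies_def)
qed

lemma continuous_on_join_copies:
  assumes f: "continuous_on (usphere n) f" and image: "f ` usphere n \<subseteq> usphere m"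
  shows "continuous_on S (join_copies n m k f)"
  unfolding join_copies_def
proof (intro continuous_on_coordinatewise_then_product)
  fix i
  have "continuous_on S (\<lambda>x. cone_map n f (vec_block n q x) r)" for q r
    by (intro continuous_on_compose2[OF continuous_on_cone_map[OF f image] continuous_on_vec_block])
      (auto intro: vec_block_in_vec_space)
  then show "continuous_on S (\<lambda>x. if i < k*m then cone_map n f (vec_block n (i div m) x) (i mod m) else 0)"
    by (cases "i < k*m") simp_all
qed

lemma join_copies_rep_act:
  assumes \<rho>: "orth_rep G n \<rho>" and g: "g \<in> G"
    and f: "\<forall>u\<in>usphere n. f (rep_act n \<rho> g u) = rep_act m \<sigma> g (f u)"
  shows "join_copies n m k f (rep_act (k*n) (rep_copies n k \<rho>) g x)
       = rep_act (k*m) (rep_copies m k \<sigma>) g (join_copies n m k f x)"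
proof
  fix i
  show "join_copies n m k f (rep_act (k*n) (rep_copies n k \<rho>) g x) i
      = rep_act (k*m) (rep_copies m k \<sigma>) g (join_copies n m k f x) i"
  proof (cases "i < k*m")
    case True
    let ?q = "i div m"
    have q: "?q < k"
      using less_mult_imp_div_less[OF True] .
    have block: "vec_block m ?q (join_copies n m k f x) j = cone_map n f (vec_block n ?q x) j"
      if "j < m" for j
      using q that by (simp add: vec_block_def join_copies_block_entry)
    have "join_copies n m k f (rep_act (k*n) (rep_copies n k \<rho>) g x) i
        = cone_map n f (rep_act n \<rho> g (vec_block n ?q x)) (i mod m)"
      using True by (simp add: join_copies_def vec_block_rep_act_rep_copies[OF q])
    also have "\<dots> = rep_act m \<sigma> g (cone_map n f (vec_block n ?q x)) (i mod m)"
      by (simp add: cone_map_rep_act[OF \<rho> g vec_block_in_vec_space f])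
    also have "\<dots> = rep_act m \<sigma> g (vec_block m ?q (join_copies n m k f x)) (i mod m)"
      by (simp add: rep_act_cong[OF block])
    also have "\<dots> = rep_act (k*m) (rep_copies m k \<sigma>) g (join_copies n m k f x) i"
      using True by (simp add: rep_act_rep_copies)
    finally show ?thesis .
  qed (simp add: join_copies_def rep_act_def)
qed

lemma G_map_join_copies:
  assumes \<rho>: "orth_rep G n \<rho>" and f: "G_map G n \<rho> m \<sigma> f"
  shows "G_map G (k*n) (rep_copies n k \<rho>) (k*m) (rep_copies m k \<sigma>) (join_copies n m k f)"
proof -
  have cont: "continuous_on (usphere n) f" and image: "f ` usphere n \<subseteq> usphere m"
    using f by (simp_all add: G_map_def continuous_map_usphere_top_iff)
  have "continuous_map (usphere_top (k*n)) (usphere_top (k*m)) (join_copies n m k f)"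
    using continuous_on_join_copies[OF cont image] join_copies_in_usphere[OF image]
    by (auto simp: continuous_map_usphere_top_iff)
  then show ?thesis
    using f join_copies_rep_act[OF \<rho>] by (simp add: G_map_def)
qed

lemma G_map_rep_copies_mono:
  assumes F: "G_map G a \<tau> (k*m) (rep_copies m k \<sigma>) F" and "k \<le> l"
  shows "G_map G a \<tau> (l*m) (rep_copies m l \<sigma>) F"
proof -
  have "usphere (k*m) \<subseteq> usphere (l*m)"
    using \<open>k \<le> l\<close> by (intro usphere_mono) simp
  moreover have image: "F ` usphere a \<subseteq> usphere (k*m)"
    using F by (simp add: G_map_def continuous_map_usphere_top_iff)
  ultimately have "continuous_map (usphere_top a) (usphere_top (l*m)) F"
    using F by (auto simp: G_map_def continuous_map_usphere_top_iff)
  moreover have "rep_act (l*m) (rep_copies m l \<sigma>) g (F x) = rep_act (k*m) (rep_copies m k \<sigma>) g (F x)"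
    if "x \<in> usphere a" for g x
    using image that usphere_subset_vec_space \<open>k \<le> l\<close> by (intro rep_act_rep_copies_mono) auto
  ultimately show ?thesis
    using F by (simp add: G_map_def)
qed

theorem proposition3p1:
  fixes G :: "(real^'n^'n) set"
  assumes "compact_matrix_group G"
    and "\<not> BU_type_I G"
  shows "\<not> BU_type_II G"
proof -
  obtain n m \<rho> \<sigma> f where \<rho>: "orth_rep G n \<rho>" "fixed_point_free G n \<rho>"
    and \<sigma>: "orth_rep G m \<sigma>" "fixed_point_free G m \<sigma>"
    and f: "G_map G n \<rho> m \<sigma> f" and "m < n"
    using assms(2) unfolding BU_type_I_def by (meson not_le)
  have "f ` usphere n \<subseteq> usphere m"
    using f by (simp add: G_map_def continuous_map_usphere_top_iff)
  then have "0 < m"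
    using \<open>m < n\<close> usphere_eq_empty_iff[of n] usphere_eq_empty_iff[of m] by auto
  define F where "F = join_copies n m m f"
  have F_lower: "G_map G (m*n) (rep_copies n m \<rho>) (m*m) (rep_copies m m \<sigma>) F"
    unfolding F_def by (rule G_map_join_copies[OF \<rho>(1) f])
  then have F_map: "G_map G (m*n) (rep_copies n m \<rho>) (m*n) (rep_copies m n \<sigma>) F"
    using G_map_rep_copies_mono[OF F_lower, of n] \<open>m < n\<close> by (simp add: mult.commute)
  have "Brouwer_degree2 (m*n - 1) F = 0"
    using F_map F_lower \<open>0 < m\<close> \<open>m < n\<close>
    by (intro Brouwer_degree2_eq_0_if_image_in_lower_sphere[where m="m*m"])
      (simp_all add: G_map_def continuous_map_usphere_top_iff)
  then have "\<not> (m*n = 0 \<or> Brouwer_degree2 (m*n - 1) F \<noteq> 0)"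
    using \<open>0 < m\<close> \<open>m < n\<close> by simp
  moreover have "orth_rep G (m*n) (rep_copies m n \<sigma>)" "fixed_point_free G (m*n) (rep_copies m n \<sigma>)"
    using orth_rep_rep_copies[OF \<sigma>(1), of n] fixed_point_free_rep_copies[OF \<sigma>(2), of n]
    by (simp_all add: mult.commute)
  ultimately show ?thesis
    using F_map orth_rep_rep_copies[OF \<rho>(1)] fixed_point_free_rep_copies[OF \<rho>(2)]
    unfolding BU_type_II_def by blast
qed

end
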